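(* Let $\alpha=2\sqrt7-4$. If $W$ is a balanced tetrahedral erasure channel with $Q(W)\ge\alpha$, then $Q(W^{s})\ge\alpha$ and $Q(W^{p})\ge\alpha$.
   Context: $\mathrm{TEC}(p,q,r,s,t)$ denotes a tetrahedral erasure channel with parameters $p,q,r,s,t\ge0$ summing to $1$. Its entropy is $H=\frac{q+r+s}{2}+t$, its edge mass is $E=q+r+s$, and its Quetelet index is $Q=E/(H(1-H))$ (defined when $0<H<1$). It is balanced if $q=r=s$. For $W=\mathrm{TEC}(p,q,r,s,t)$, the serial child is $W^{s}=\mathrm{TEC}(p^2,\ ps+sq+qp,\ pq+qr+rp,\ pr+rs+sp,\ 1-\text{(sum of the other four)})$ and the parallel child is $W^{p}=\mathrm{TEC}(1-\text{(sum of the other four)},\ ts+sq+qt,\ tq+qr+rt,\ tr+rs+st,\ t^2)$. (For a balanced $W$ with $H(W)=x$, $E(W)=y$ one has $H(W^{p})=x^2-y^2/12$, $E(W^{p})=2xy-2y^2/3$, $H(W^{s})=2x-x^2+y^2/12$, $E(W^{s})=2y-2xy-2y^2/3$.) *)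

theory Defs
  imports Complex_Main
begin

record tec =
  tp :: real
  tq :: real
  tr :: real
  ts :: real
  tt :: real

definition is_TEC :: "tec \<Rightarrow> bool" where
  "is_TEC W \<longleftrightarrow> tp W \<ge> 0 \<and> tq W \<ge> 0 \<and> tr W \<ge> 0 \<and> ts W \<ge> 0 \<and> tt W \<ge> 0
     \<and> tp W + tq W + tr W + ts W + tt W = 1"

definition TEC :: "real \<Rightarrow> real \<Rightarrow> real \<Rightarrow> real \<Rightarrow> real \<Rightarrow> tec" where
  "TEC p q r s t = \<lparr>tp = p, tq = q, tr = r, ts = s, tt = t\<rparr>"

definition tec_H :: "tec \<Rightarrow> real" where
  "tec_H W = (tq W + tr W + ts W) / 2 + tt W"

definition tec_E :: "tec \<Rightarrow> real" where
  "tec_E W = tq W + tr W + ts W"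

text \<open>Quetelet index; only meaningful when 0 < H < 1 (with HOL's division, x/0 = 0).\<close>
definition tec_Q :: "tec \<Rightarrow> real" where
  "tec_Q W = tec_E W / (tec_H W * (1 - tec_H W))"

definition balanced :: "tec \<Rightarrow> bool" where
  "balanced W \<longleftrightarrow> tq W = tr W \<and> tr W = ts W"

definition serial :: "tec \<Rightarrow> tec" where
  "serial W = (let p = tp W; q = tq W; r = tr W; s = ts W;
       p' = p^2; q' = p*s + s*q + q*p; r' = p*q + q*r + r*p; s' = p*r + r*s + s*p
     in TEC p' q' r' s' (1 - (p' + q' + r' + s')))"

definition parallel :: "tec \<Rightarrow> tec" where
  "parallel W = (let q = tq W; r = tr W; s = ts W; t = tt W;
       q' = t*s + s*q + q*t; r' = t*q + q*r + r*t; s' = t*r + r*s + s*t; t' = t^2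
     in TEC (1 - (q' + r' + s' + t')) q' r' s' t')"

end

theory Submission
  imports Defs
begin

text \<open>For a balanced channel only the coordinates x = H(W) and y = E(W) matter, and the serial
  transform is the parallel one conjugated by x \<mapsto> 1 - x, under which Q is invariant. So it
  suffices to show that the parallel step preserves Q \<ge> \<alpha>, i.e. that the deficit
  E' - \<alpha> H'(1 - H') of the child is nonnegative for every admissible y between
  \<alpha> x (1 - x) and 2 min(x, 1 - x). As a function of y this deficit is a quartic lying above
  its chord on that interval, so it is enough to check the two endpoints. At the lower endpoint
  the deficit factors into nonnegative terms exactly because \<alpha> is a root of
  \<alpha>^2 + 8\<alpha> - 12; at the upper endpoint it only needs \<alpha> \<le> 2.\<close>

definition parallel_H :: "real \<Rightarrow> real \<Rightarrow> real" where
  "parallel_H x y = x^2 - y^2/12"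

definition parallel_E :: "real \<Rightarrow> real \<Rightarrow> real" where
  "parallel_E x y = 2*x*y - 2*y^2/3"

definition quetelet :: "real \<Rightarrow> real \<Rightarrow> real" where
  "quetelet h e = e / (h * (1 - h))"

definition quetelet_deficit :: "real \<Rightarrow> real \<Rightarrow> real \<Rightarrow> real" where
  "quetelet_deficit a x y =
     parallel_E x y - a * parallel_H x y * (1 - parallel_H x y)"

lemma tec_Q_eq_quetelet: "tec_Q W = quetelet (tec_H W) (tec_E W)"
  unfolding tec_Q_def quetelet_def ..

lemma quetelet_one_minus [simp]: "quetelet (1 - h) e = quetelet h e"
  unfolding quetelet_def by (simp add: mult.commute)

lemma balanced_TEC_coordinates:
  assumes "is_TEC W" "balanced W"
  defines "x \<equiv> tec_H W" and "y \<equiv> tec_E W"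
  shows "0 \<le> y" "y \<le> 2*x" "y \<le> 2*(1 - x)"
    and "tec_H (parallel W) = parallel_H x y" "tec_E (parallel W) = parallel_E x y"
    and "tec_H (serial W) = 1 - parallel_H (1 - x) y" "tec_E (serial W) = parallel_E (1 - x) y"
proof -
  define e where "e = tq W"
  define t where "t = tt W"
  have W: "tq W = e" "tr W = e" "ts W = e" "tt W = t" "tp W = 1 - 3*e - t"
    and nonneg: "0 \<le> e" "0 \<le> t" "3*e + t \<le> 1"
    using assms(1,2) unfolding is_TEC_def balanced_def e_def t_def by auto
  have x: "x = 3*e/2 + t" and y: "y = 3*e"
    unfolding x_def y_def tec_H_def tec_E_def W by simp_all
  show "0 \<le> y" "y \<le> 2*x" "y \<le> 2*(1 - x)"
    using nonneg unfolding x y by auto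
  show "tec_H (parallel W) = parallel_H x y" "tec_E (parallel W) = parallel_E x y"
    "tec_H (serial W) = 1 - parallel_H (1 - x) y" "tec_E (serial W) = parallel_E (1 - x) y"
    unfolding tec_H_def tec_E_def parallel_def serial_def TEC_def Let_def
      parallel_H_def parallel_E_def W x y
    by (simp_all add: field_simps power2_eq_square)
qed

lemma nonneg_above_chord:
  fixes f :: "real \<Rightarrow> real"
  assumes "l \<le> y" "y \<le> h" "0 \<le> f l" "0 \<le> f h"
    and chord: "(h - y) * f l + (y - l) * f h \<le> (h - l) * f y"
  shows "0 \<le> f y"
proof (cases "l < h")
  case True
  have "0 \<le> (h - y) * f l" "0 \<le> (y - l) * f h"
    using assms(1-4) by simp_all
  then have "0 \<le> (h - l) * f y"
    using chord by linarith
  then show ?thesis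
    using True by (simp add: zero_le_mult_iff)
next
  case False
  then have "y = l"
    using assms(1,2) by linarith
  then show ?thesis
    using assms(3) by simp
qed

lemma quetelet_deficit_chord:
  "(h - l) * quetelet_deficit a x y =
     (h - y) * quetelet_deficit a x l + (y - l) * quetelet_deficit a x h
   + (h - l) * (y - l) * (h - y)
       * (2/3 - a/12 + a*x^2/6 - a*(l^2 + h^2 + y^2 + l*h + l*y + h*y)/144)"
  unfolding quetelet_deficit_def parallel_H_def parallel_E_def
  by (simp add: field_simps power2_eq_square power3_eq_cube)

lemma quetelet_deficit_lower_endpoint:
  assumes "a^2 + 8*a - 12 = 0" "0 \<le> a" "0 \<le> x" "x \<le> 1"
  shows "0 \<le> quetelet_deficit a x (a*x*(1 - x))"
proof -
  have "quetelet_deficit a x (a*x*(1 - x))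
      = x^2 * a * (1 - x)^2 * (a^2*(1 - x)*(1 + x)/6 + a^4*(1 - x)^2*x^2/144)"
    using assms(1) unfolding quetelet_deficit_def parallel_H_def parallel_E_def by algebra
  also have "\<dots> \<ge> 0"
    using assms(2-4) by (intro mult_nonneg_nonneg add_nonneg_nonneg) auto
  finally show ?thesis .
qed

lemma quetelet_deficit_at_double:
  assumes "0 \<le> a" "a \<le> 2"
  shows "0 \<le> quetelet_deficit a x (2*x)"
proof -
  have "quetelet_deficit a x (2*x) = (2*x^2/3) * (2 - a + 2*a*x^2/3)"
    unfolding quetelet_deficit_def parallel_H_def parallel_E_def
    by (simp add: field_simps power2_eq_square)
  also have "\<dots> \<ge> 0"
    using assms by (intro mult_nonneg_nonneg) auto
  finally show ?thesis .
qed

lemma quetelet_deficit_at_double_complement: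
  assumes "0 \<le> a" "a \<le> 2" "1/2 \<le> x" "x \<le> 1"
  shows "0 \<le> quetelet_deficit a x (2*(1 - x))"
proof -
  define d where "d = 1 - x"
  define P where "P = (1 - 2*d + 2*d^2/3) * (2 - 2*d/3)"
  have d: "0 \<le> d" "d \<le> 1/2"
    using assms unfolding d_def by auto
  have "0 \<le> P"
    unfolding P_def using d by (intro mult_nonneg_nonneg) auto
  then have "a * P \<le> 2 * P"
    using assms(2) by (simp add: mult_right_mono)
  moreover have "4 - 20*d/3 - 2*P = (8*d/3) * (1 - 2*d + d^2/3)"
    unfolding P_def by (simp add: field_simps power2_eq_square power3_eq_cube)
  moreover have "0 \<le> (8*d/3) * (1 - 2*d + d^2/3)"
    using d by (intro mult_nonneg_nonneg) auto
  ultimately have "0 \<le> 4 - 20*d/3 - a*P"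
    by linarith
  moreover have "quetelet_deficit a x (2*(1 - x)) = d * (4 - 20*d/3 - a*P)"
    unfolding quetelet_deficit_def parallel_H_def parallel_E_def d_def P_def
    by (simp add: field_simps power2_eq_square power3_eq_cube)
  ultimately show ?thesis
    using d by simp
qed

lemma quetelet_deficit_nonneg:
  assumes a: "a^2 + 8*a - 12 = 0" "0 \<le> a" "a \<le> 2"
    and x: "0 < x" "x < 1"
    and y: "a*x*(1 - x) \<le> y" "y \<le> 2*x" "y \<le> 2*(1 - x)"
  shows "0 \<le> quetelet_deficit a x y"
proof -
  define l where "l = a*x*(1 - x)"
  define h where "h = min (2*x) (2*(1 - x))"
  have bounds: "0 \<le> l" "l \<le> y" "y \<le> h" "h \<le> 1"
    using a x y unfolding l_def h_def by auto
  have at_l: "0 \<le> quetelet_deficit a x l"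
    unfolding l_def using quetelet_deficit_lower_endpoint a x by simp
  have at_h: "0 \<le> quetelet_deficit a x h"
    using quetelet_deficit_at_double quetelet_deficit_at_double_complement a x
    unfolding h_def by (cases "x \<le> 1/2") (simp_all add: min_def)
  have "l^2 + h^2 + y^2 + l*h + l*y + h*y \<le> 6"
  proof -
    have "l^2 \<le> 1" "h^2 \<le> 1" "y^2 \<le> 1" "l*h \<le> 1" "l*y \<le> 1" "h*y \<le> 1"
      using bounds by (auto intro: mult_le_one simp: power2_eq_square)
    then show ?thesis by linarith
  qed
  then have "a*(l^2 + h^2 + y^2 + l*h + l*y + h*y) \<le> a*6"
    using a by (intro mult_left_mono) auto
  moreover have "0 \<le> a*x^2"
    using a by simp
  ultimately have "0 \<le> 2/3 - a/12 + a*x^2/6 - a*(l^2 + h^2 + y^2 + l*h + l*y + h*y)/144"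
    using a by linarith
  then have "(h - y) * quetelet_deficit a x l + (y - l) * quetelet_deficit a x h
      \<le> (h - l) * quetelet_deficit a x y"
    unfolding quetelet_deficit_chord[of h l a x y] using bounds by simp
  then show ?thesis
    using nonneg_above_chord[of l y h "quetelet_deficit a x"] bounds at_l at_h by simp
qed

lemma parallel_quetelet_ge:
  assumes a: "a^2 + 8*a - 12 = 0" "0 \<le> a" "a \<le> 2"
    and x: "0 < x" "x < 1"
    and y: "0 \<le> y" "y \<le> 2*x" "y \<le> 2*(1 - x)" "a \<le> quetelet x y"
  shows "0 < parallel_H x y" "parallel_H x y < 1" "a \<le> quetelet (parallel_H x y) (parallel_E x y)"
proof -
  have "y^2 \<le> 4 * x^2"
    using power_mono[of y "2*x" 2] y by (simp add: power_mult_distrib)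
  moreover have "0 < x^2" "x^2 < 1" "0 \<le> y^2"
    using x by (simp_all add: power_less_one_iff)
  ultimately show H0: "0 < parallel_H x y" and H1: "parallel_H x y < 1"
    unfolding parallel_H_def by linarith+
  have "a*x*(1 - x) \<le> y"
    using y(4) x unfolding quetelet_def by (simp add: pos_le_divide_eq mult.assoc)
  then have "0 \<le> quetelet_deficit a x y"
    using quetelet_deficit_nonneg a x y by blast
  then show "a \<le> quetelet (parallel_H x y) (parallel_E x y)"
    using H0 H1 unfolding quetelet_deficit_def quetelet_def
    by (simp add: pos_le_divide_eq mult.assoc)
qed

lemma alpha_root: "(2 * sqrt 7 - 4)^2 + 8*(2 * sqrt 7 - 4) - 12 = (0::real)"
  by (simp add: power2_eq_square algebra_simps)

lemma alpha_bounds: "0 \<le> 2 * sqrt 7 - 4" "2 * sqrt 7 - 4 \<le> (2::real)"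
proof -
  have "2 \<le> sqrt (7::real)"
    by (rule real_le_rsqrt) simp
  moreover have "sqrt 7 \<le> (3::real)"
    by (rule real_le_lsqrt) simp_all
  ultimately show "0 \<le> 2 * sqrt 7 - 4" "2 * sqrt 7 - 4 \<le> (2::real)"
    by simp_all
qed

theorem mainTheorem5:
  fixes W :: tec
  assumes "is_TEC W" and "balanced W"
    and "0 < tec_H W" and "tec_H W < 1"
    and "tec_Q W \<ge> 2 * sqrt 7 - 4"
  shows "0 < tec_H (serial W) \<and> tec_H (serial W) < 1 \<and> tec_Q (serial W) \<ge> 2 * sqrt 7 - 4
         \<and> 0 < tec_H (parallel W) \<and> tec_H (parallel W) < 1 \<and> tec_Q (parallel W) \<ge> 2 * sqrt 7 - 4"
proof -
  define x where "x = tec_H W"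
  define y where "y = tec_E W"
  note coords = balanced_TEC_coordinates[OF assms(1,2), folded x_def y_def]
  note parallel_ge = parallel_quetelet_ge[OF alpha_root alpha_bounds]
  have Q: "2 * sqrt 7 - 4 \<le> quetelet x y" "2 * sqrt 7 - 4 \<le> quetelet (1 - x) y"
    using assms(5) unfolding tec_Q_eq_quetelet x_def y_def by simp_all
  have "0 < x" "x < 1"
    using assms(3,4) unfolding x_def by simp_all
  note parallel = parallel_ge[OF this coords(1-3) Q(1)]
  have "0 < 1 - x" "1 - x < 1" "y \<le> 2*(1 - x)" "y \<le> 2*(1 - (1 - x))"
    using \<open>0 < x\<close> \<open>x < 1\<close> coords(2,3) by simp_all
  note serial = parallel_ge[OF this(1,2) coords(1) this(3,4) Q(2)]
  show ?thesis
    unfolding tec_Q_eq_quetelet coords(4-7) using parallel serial by simp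
qed

end
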